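(* Let $m,n,r$ be positive integers with $r\le n$, and let $S:M_r\to M_n$ be the linear map $$S(a)=\begin{pmatrix} a&0\\0&0\end{pmatrix}\in M_n,\qquad a\in M_r,$$ which places an $r\times r$ matrix in the upper-left corner of an $n\times n$ zero matrix. If a positive linear map $\phi:M_m\to M_r$ generates an exposed ray of the convex cone $\mathbb P_1[M_m,M_r]$, then $S\circ\phi:M_m\to M_n$ generates an exposed ray of the convex cone $\mathbb P_1[M_m,M_n]$.
   Context: $M_k$ denotes the algebra of $k\times k$ complex matrices. A linear map $\phi:M_m\to M_n$ is positive if it sends positive semidefinite matrices to positive semidefinite matrices; $\mathbb P_1[M_m,M_n]$ denotes the convex cone of all positive linear maps $M_m\to M_n$, regarded as a cone in the real vector space of Hermiticity-preserving linear maps $M_m\to M_n$. A nonzero $\phi$ in the cone generates an exposed ray if there is a real linear functional $f$ on that real vector space with $f\ge 0$ on the cone such that $\{\psi\in\mathbb P_1[M_m,M_n]: f(\psi)=0\}=\{\lambda\phi:\lambda\ge 0\}$. *)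

theory Defs
  imports Complex_Main "Jordan_Normal_Form.Matrix"
begin

text \<open>A map M_m -> M_n is a function on complex mat; to make equality of maps meaningful,
  maps are required to be extensional: zero_mat n n outside carrier_mat m m.\<close>

definition cadj :: "complex mat \<Rightarrow> complex mat" where
  "cadj A = mat (dim_col A) (dim_row A) (\<lambda>(i,j). cnj (A $$ (j,i)))"

definition hermitian_mat :: "complex mat \<Rightarrow> bool" where
  "hermitian_mat A \<longleftrightarrow> cadj A = A"

definition psd :: "nat \<Rightarrow> complex mat \<Rightarrow> bool" where
  "psd k A \<longleftrightarrow> A \<in> carrier_mat k k \<and> hermitian_mat A \<and>
     (\<forall>v \<in> carrier_vec k.
        (\<Sum>i<k. \<Sum>j<k. cnj (v $ i) * A $$ (i,j) * v $ j) \<in> \<real> \<and>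
        Re (\<Sum>i<k. \<Sum>j<k. cnj (v $ i) * A $$ (i,j) * v $ j) \<ge> 0)"

definition lin_map :: "nat \<Rightarrow> nat \<Rightarrow> (complex mat \<Rightarrow> complex mat) \<Rightarrow> bool" where
  "lin_map m n \<phi> \<longleftrightarrow>
     (\<forall>A \<in> carrier_mat m m. \<phi> A \<in> carrier_mat n n) \<and>
     (\<forall>A \<in> carrier_mat m m. \<forall>B \<in> carrier_mat m m. \<phi> (A + B) = \<phi> A + \<phi> B) \<and>
     (\<forall>A \<in> carrier_mat m m. \<forall>c::complex. \<phi> (c \<cdot>\<^sub>m A) = c \<cdot>\<^sub>m \<phi> A) \<and>
     (\<forall>A. A \<notin> carrier_mat m m \<longrightarrow> \<phi> A = 0\<^sub>m n n)"

definition HP :: "nat \<Rightarrow> nat \<Rightarrow> (complex mat \<Rightarrow> complex mat) set" where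
  "HP m n = {\<phi>. lin_map m n \<phi> \<and> (\<forall>A \<in> carrier_mat m m. \<phi> (cadj A) = cadj (\<phi> A))}"

definition P1 :: "nat \<Rightarrow> nat \<Rightarrow> (complex mat \<Rightarrow> complex mat) set" where
  "P1 m n = {\<phi>. lin_map m n \<phi> \<and> (\<forall>A. psd m A \<longrightarrow> psd n (\<phi> A))}"

definition map_comb :: "real \<Rightarrow> (complex mat \<Rightarrow> complex mat) \<Rightarrow> real \<Rightarrow> (complex mat \<Rightarrow> complex mat)
    \<Rightarrow> (complex mat \<Rightarrow> complex mat)" where
  "map_comb a \<phi> b \<psi> = (\<lambda>A. complex_of_real a \<cdot>\<^sub>m \<phi> A + complex_of_real b \<cdot>\<^sub>m \<psi> A)"

definition real_lin_functional :: "nat \<Rightarrow> nat \<Rightarrow> ((complex mat \<Rightarrow> complex mat) \<Rightarrow> real) \<Rightarrow> bool" where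
  "real_lin_functional m n f \<longleftrightarrow>
     (\<forall>\<phi> \<in> HP m n. \<forall>\<psi> \<in> HP m n. \<forall>a b :: real.
        f (map_comb a \<phi> b \<psi>) = a * f \<phi> + b * f \<psi>)"

definition exposed_ray :: "nat \<Rightarrow> nat \<Rightarrow> (complex mat \<Rightarrow> complex mat) \<Rightarrow> bool" where
  "exposed_ray m n \<phi> \<longleftrightarrow> \<phi> \<in> P1 m n \<and> \<phi> \<noteq> (\<lambda>A. 0\<^sub>m n n) \<and>
     (\<exists>f. real_lin_functional m n f \<and> (\<forall>\<psi> \<in> P1 m n. f \<psi> \<ge> 0) \<and>
        {\<psi> \<in> P1 m n. f \<psi> = 0} = {(\<lambda>A. complex_of_real l \<cdot>\<^sub>m \<phi> A) | l. l \<ge> 0})"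

definition corner :: "nat \<Rightarrow> nat \<Rightarrow> complex mat \<Rightarrow> complex mat" where
  "corner r n a = mat n n (\<lambda>(i,j). if i < r \<and> j < r then a $$ (i,j) else 0)"

end

theory Submission
  imports Defs
begin

text \<open>Let \<open>f\<close> expose the ray of \<open>\<phi>\<close>. For a positive map \<open>\<psi> : M\<^sub>m \<rightarrow> M\<^sub>n\<close> take
  \<open>F \<psi> = f (P \<psi>(\<cdot>) P) + \<Sum>\<^sub>Q Re tr (P\<^sup>\<bottom> \<psi>(Q) P\<^sup>\<bottom>)\<close>, where \<open>P\<close> and \<open>P\<^sup>\<bottom> = 1 - P\<close> are the projections
  onto the first \<open>r\<close> and the last \<open>n - r\<close> coordinates and \<open>Q\<close> runs over the rank-one positive
  matrices \<open>(e\<^sub>k + t e\<^sub>l)(e\<^sub>k + t e\<^sub>l)\<^sup>*\<close>, \<open>t \<in> {\<plusminus>1, \<plusminus>\<i>}\<close>, which span \<open>M\<^sub>m\<close> by polarization.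
  Both summands are nonnegative on positive maps. If \<open>F \<psi> = 0\<close>, each positive matrix \<open>\<psi>(Q)\<close>
  has zero diagonal outside the upper-left block, hence zero rows and columns there; by
  spanning, \<open>\<psi> = S \<circ> P \<psi>(\<cdot>) P\<close>, and \<open>f\<close> vanishes on the positive map \<open>P \<psi>(\<cdot>) P\<close>, which is
  therefore a nonnegative multiple of \<open>\<phi>\<close>.\<close>

definition qform :: "nat \<Rightarrow> complex mat \<Rightarrow> complex vec \<Rightarrow> complex" where
  "qform k A v = (\<Sum>i<k. \<Sum>j<k. cnj (v $ i) * A $$ (i,j) * v $ j)"

lemma psd_iff_qform:
  "psd k A \<longleftrightarrow> A \<in> carrier_mat k k \<and> hermitian_mat A \<and>
     (\<forall>v \<in> carrier_vec k. qform k A v \<in> \<real> \<and> 0 \<le> Re (qform k A v))"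
  by (simp add: psd_def qform_def)

lemma psd_carrier: "psd k A \<Longrightarrow> A \<in> carrier_mat k k"
  by (simp add: psd_def)

lemma psd_qform: "psd k A \<Longrightarrow> v \<in> carrier_vec k \<Longrightarrow> qform k A v \<in> \<real> \<and> 0 \<le> Re (qform k A v)"
  by (simp add: psd_iff_qform)

lemma psdI:
  assumes "A \<in> carrier_mat k k" and "hermitian_mat A"
    and "\<And>v. v \<in> carrier_vec k \<Longrightarrow> qform k A v \<in> \<real> \<and> 0 \<le> Re (qform k A v)"
  shows "psd k A"
  using assms by (simp add: psd_iff_qform)

lemma psd_conj_entry:
  assumes "psd k A" and "i < k" and "j < k"
  shows "A $$ (j,i) = cnj (A $$ (i,j))"
proof -
  have "A \<in> carrier_mat k k" and "cadj A = A"
    using assms(1) by (auto simp: psd_def hermitian_mat_def)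
  then show ?thesis
    using assms(2,3) by (metis carrier_matD cadj_def index_mat(1) case_prod_conv)
qed

lemma qform_unit_vec:
  assumes "i < k"
  shows "qform k A (vec k (\<lambda>a. if a = i then 1 else 0)) = A $$ (i,i)"
proof -
  have "qform k A (vec k (\<lambda>a. if a = i then 1 else 0)) = (\<Sum>a<k. if a = i then A $$ (a,i) else 0)"
    unfolding qform_def by (rule sum.cong) (auto simp: if_distrib cong: if_cong)
  then show ?thesis
    using assms by simp
qed

lemma psd_diag:
  assumes "psd k A" and "i < k"
  shows "A $$ (i,i) \<in> \<real>" and "0 \<le> Re (A $$ (i,i))"
  using psd_qform[OF assms(1), of "vec k (\<lambda>a. if a = i then 1 else 0)"]
  by (simp_all add: qform_unit_vec assms(2))

lemma sum_two_support:
  fixes g :: "nat \<Rightarrow> 'a::comm_monoid_add"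
  assumes "i < k" and "j < k" and "i \<noteq> j"
    and "\<And>a. a < k \<Longrightarrow> a \<noteq> i \<Longrightarrow> a \<noteq> j \<Longrightarrow> g a = 0"
  shows "(\<Sum>a<k. g a) = g i + g j"
proof -
  have "(\<Sum>a<k. g a) = (\<Sum>a\<in>{i,j}. g a)"
    by (rule sum.mono_neutral_right) (use assms in auto)
  then show ?thesis
    using assms(3) by simp
qed

lemma qform_two_support:
  assumes ij: "i < k" "j < k" "i \<noteq> j"
  shows "qform k A (vec k (\<lambda>a. if a = i then x else if a = j then y else 0)) =
    cnj x * A $$ (i,i) * x + cnj x * A $$ (i,j) * y + cnj y * A $$ (j,i) * x + cnj y * A $$ (j,j) * y"
proof -
  let ?v = "vec k (\<lambda>a. if a = i then x else if a = j then y else 0)"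
  have row: "(\<Sum>b<k. cnj (?v $ a) * A $$ (a,b) * ?v $ b) =
      cnj (?v $ a) * A $$ (a,i) * x + cnj (?v $ a) * A $$ (a,j) * y" for a
    by (subst sum_two_support[OF ij]) (use ij in auto)
  show ?thesis
    unfolding qform_def row by (subst sum_two_support[OF ij]) (use ij in auto)
qed

lemma psd_zero_diag_imp_zero_entry:
  assumes P: "psd k A" and ij: "i < k" "j < k" and zero: "A $$ (i,i) = 0"
  shows "A $$ (i,j) = 0"
proof (rule ccontr)
  define b where "b = A $$ (i,j)"
  assume "A $$ (i,j) \<noteq> 0"
  then have "b \<noteq> 0" and "i \<noteq> j"
    using zero by (auto simp: b_def)
  define c where "c = (Re (A $$ (j,j)) + 1) / (2 * (cmod b)\<^sup>2)"
  define x where "x = - complex_of_real c * b"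
  \<comment> \<open>The quadratic form at \<open>x e\<^sub>i + e\<^sub>j\<close> has real part \<open>Re A\<^sub>j\<^sub>j - 2 c |b|\<^sup>2 = -1\<close>.\<close>
  have "qform k A (vec k (\<lambda>a. if a = i then x else if a = j then 1 else 0))
      = complex_of_real (- 2 * c * (cmod b)\<^sup>2) + A $$ (j,j)"
    unfolding qform_two_support[OF ij \<open>i \<noteq> j\<close>] psd_conj_entry[OF P ij] zero
    by (simp add: x_def b_def[symmetric] algebra_simps complex_norm_square[symmetric])
  also have "\<dots> = complex_of_real (- Re (A $$ (j,j)) - 1) + A $$ (j,j)"
    using \<open>b \<noteq> 0\<close> by (simp add: c_def field_simps)
  finally have "Re (qform k A (vec k (\<lambda>a. if a = i then x else if a = j then 1 else 0))) < 0"
    by simp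
  then show False
    using psd_qform[OF P] by (metis not_le vec_carrier)
qed

definition rank_one_mat :: "nat \<Rightarrow> (nat \<Rightarrow> complex) \<Rightarrow> complex mat" where
  "rank_one_mat k w = mat k k (\<lambda>(i,j). w i * cnj (w j))"

lemma rank_one_mat_carrier [simp]: "rank_one_mat k w \<in> carrier_mat k k"
  by (simp add: rank_one_mat_def)

lemma psd_rank_one_mat: "psd k (rank_one_mat k w)"
proof (rule psdI)
  show "hermitian_mat (rank_one_mat k w)"
    unfolding hermitian_mat_def by (intro eq_matI) (auto simp: cadj_def rank_one_mat_def)
  fix v :: "complex vec"
  define z where "z = (\<Sum>i<k. cnj (v $ i) * w i)"
  have "qform k (rank_one_mat k w) v = (\<Sum>i<k. \<Sum>j<k. cnj (v $ i) * w i * (cnj (w j) * v $ j))"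
    by (simp add: qform_def rank_one_mat_def mult.assoc)
  also have "\<dots> = z * (\<Sum>j<k. cnj (w j) * v $ j)"
    by (simp add: z_def sum_product)
  also have "\<dots> = z * cnj z"
    by (simp add: z_def mult.commute)
  also have "\<dots> = complex_of_real ((cmod z)\<^sup>2)"
    by (rule complex_norm_square[symmetric])
  finally show "qform k (rank_one_mat k w) v \<in> \<real> \<and> 0 \<le> Re (qform k (rank_one_mat k w) v)"
    by simp
qed simp

definition topleft :: "nat \<Rightarrow> complex mat \<Rightarrow> complex mat" where
  "topleft r B = mat r r (\<lambda>(i,j). B $$ (i,j))"

lemma topleft_carrier [simp]: "topleft r B \<in> carrier_mat r r"
  and topleft_dims [simp]: "dim_row (topleft r B) = r" "dim_col (topleft r B) = r"
  and topleft_index [simp]: "i < r \<Longrightarrow> j < r \<Longrightarrow> topleft r B $$ (i,j) = B $$ (i,j)"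
  by (simp_all add: topleft_def)

lemma corner_carrier [simp]: "corner r n B \<in> carrier_mat n n"
  and corner_dims [simp]: "dim_row (corner r n B) = n" "dim_col (corner r n B) = n"
  and corner_index [simp]:
    "i < n \<Longrightarrow> j < n \<Longrightarrow> corner r n B $$ (i,j) = (if i < r \<and> j < r then B $$ (i,j) else 0)"
  by (simp_all add: corner_def)

lemma topleft_corner: "B \<in> carrier_mat r r \<Longrightarrow> r \<le> n \<Longrightarrow> topleft r (corner r n B) = B"
  by (rule eq_matI) auto

lemma corner_zero [simp]: "corner r n (0\<^sub>m r r) = 0\<^sub>m n n"
  by (rule eq_matI) auto

lemma topleft_zero [simp]: "r \<le> n \<Longrightarrow> topleft r (0\<^sub>m n n) = 0\<^sub>m r r"
  by (rule eq_matI) auto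

lemma corner_add: "B \<in> carrier_mat r r \<Longrightarrow> C \<in> carrier_mat r r \<Longrightarrow>
    corner r n (B + C) = corner r n B + corner r n C"
  by (rule eq_matI) auto

lemma corner_smult: "B \<in> carrier_mat r r \<Longrightarrow> corner r n (c \<cdot>\<^sub>m B) = c \<cdot>\<^sub>m corner r n B"
  by (rule eq_matI) auto

lemma topleft_add: "B \<in> carrier_mat n n \<Longrightarrow> C \<in> carrier_mat n n \<Longrightarrow> r \<le> n \<Longrightarrow>
    topleft r (B + C) = topleft r B + topleft r C"
  by (rule eq_matI) auto

lemma topleft_smult: "B \<in> carrier_mat n n \<Longrightarrow> r \<le> n \<Longrightarrow> topleft r (c \<cdot>\<^sub>m B) = c \<cdot>\<^sub>m topleft r B"
  by (rule eq_matI) auto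

lemma topleft_cadj: "B \<in> carrier_mat n n \<Longrightarrow> r \<le> n \<Longrightarrow> topleft r (cadj B) = cadj (topleft r B)"
  by (rule eq_matI) (auto simp: cadj_def)

lemma corner_cadj: "B \<in> carrier_mat r r \<Longrightarrow> corner r n (cadj B) = cadj (corner r n B)"
  by (rule eq_matI) (auto simp: cadj_def)

lemma sum_sum_block:
  fixes f :: "nat \<Rightarrow> nat \<Rightarrow> complex"
  assumes "r \<le> n" and "\<And>i j. i < n \<Longrightarrow> j < n \<Longrightarrow> \<not> (i < r \<and> j < r) \<Longrightarrow> f i j = 0"
  shows "(\<Sum>i<n. \<Sum>j<n. f i j) = (\<Sum>i<r. \<Sum>j<r. f i j)"
proof -
  have "(\<Sum>i<n. \<Sum>j<n. f i j) = (\<Sum>i<r. \<Sum>j<n. f i j)"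
    by (rule sum.mono_neutral_right) (use assms in auto)
  also have "\<dots> = (\<Sum>i<r. \<Sum>j<r. f i j)"
    by (rule sum.cong[OF refl], rule sum.mono_neutral_right) (use assms in auto)
  finally show ?thesis .
qed

lemma psd_topleft:
  assumes P: "psd n B" and "r \<le> n"
  shows "psd r (topleft r B)"
proof (rule psdI)
  have B: "B \<in> carrier_mat n n" and "cadj B = B"
    using P by (auto simp: psd_def hermitian_mat_def)
  then show "hermitian_mat (topleft r B)"
    unfolding hermitian_mat_def using topleft_cadj \<open>r \<le> n\<close> by metis
  fix v :: "complex vec"
  define w where "w = vec n (\<lambda>i. if i < r then v $ i else 0)"
  have "qform n B w = (\<Sum>i<r. \<Sum>j<r. cnj (w $ i) * B $$ (i,j) * w $ j)"
    unfolding qform_def by (rule sum_sum_block[OF \<open>r \<le> n\<close>]) (auto simp: w_def)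
  also have "\<dots> = qform r (topleft r B) v"
    unfolding qform_def using \<open>r \<le> n\<close> by (intro sum.cong refl) (simp add: w_def)
  finally have "qform r (topleft r B) v = qform n B w" ..
  then show "qform r (topleft r B) v \<in> \<real> \<and> 0 \<le> Re (qform r (topleft r B) v)"
    using psd_qform[OF P] by (simp add: w_def)
qed simp

lemma psd_corner:
  assumes P: "psd r B" and "r \<le> n"
  shows "psd n (corner r n B)"
proof (rule psdI)
  have B: "B \<in> carrier_mat r r" and "cadj B = B"
    using P by (auto simp: psd_def hermitian_mat_def)
  then show "hermitian_mat (corner r n B)"
    unfolding hermitian_mat_def by (metis corner_cadj)
  fix v :: "complex vec"
  have "qform n (corner r n B) v = (\<Sum>i<r. \<Sum>j<r. cnj (v $ i) * corner r n B $$ (i,j) * v $ j)"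
    unfolding qform_def by (rule sum_sum_block[OF \<open>r \<le> n\<close>]) auto
  also have "\<dots> = qform r B (vec r (\<lambda>i. v $ i))"
    unfolding qform_def using \<open>r \<le> n\<close> by (intro sum.cong refl) simp
  finally have "qform n (corner r n B) v = qform r B (vec r (\<lambda>i. v $ i))" .
  then show "qform n (corner r n B) v \<in> \<real> \<and> 0 \<le> Re (qform n (corner r n B) v)"
    using psd_qform[OF P] by simp
qed simp

definition polar_mat :: "nat \<Rightarrow> nat \<Rightarrow> nat \<Rightarrow> complex \<Rightarrow> complex mat" where
  "polar_mat m k l t = rank_one_mat m (\<lambda>i. (if i = k then 1 else 0) + (if i = l then t else 0))"

definition elem_mat :: "nat \<Rightarrow> nat \<Rightarrow> nat \<Rightarrow> complex mat" where
  "elem_mat m k l = mat m m (\<lambda>(i,j). if i = k \<and> j = l then 1 else 0)"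

lemma polar_mat_carrier [simp]: "polar_mat m k l t \<in> carrier_mat m m"
  and polar_mat_dims [simp]: "dim_row (polar_mat m k l t) = m" "dim_col (polar_mat m k l t) = m"
  by (simp_all add: polar_mat_def rank_one_mat_def)

lemma psd_polar_mat: "psd m (polar_mat m k l t)"
  unfolding polar_mat_def by (rule psd_rank_one_mat)

lemma elem_mat_polarization:
  "elem_mat m k l = (1/4) \<cdot>\<^sub>m (polar_mat m k l 1 + ((-1) \<cdot>\<^sub>m polar_mat m k l (-1) +
     (\<i> \<cdot>\<^sub>m polar_mat m k l \<i> + (-\<i>) \<cdot>\<^sub>m polar_mat m k l (-\<i>))))" (is "_ = ?rhs")
proof (rule eq_matI)
  fix i j
  assume "i < dim_row ?rhs" and "j < dim_col ?rhs"
  then show "elem_mat m k l $$ (i,j) = ?rhs $$ (i,j)"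
    by (cases "i = k"; cases "i = l"; cases "j = k"; cases "j = l")
      (simp_all add: elem_mat_def polar_mat_def rank_one_mat_def algebra_simps)
qed (simp_all add: elem_mat_def)

lemma mat_functional_eq_0_if_zero_on_polar_mats:
  fixes g :: "complex mat \<Rightarrow> complex"
  assumes add: "\<And>A B. A \<in> carrier_mat m m \<Longrightarrow> B \<in> carrier_mat m m \<Longrightarrow> g (A + B) = g A + g B"
    and smult: "\<And>A c. A \<in> carrier_mat m m \<Longrightarrow> g (c \<cdot>\<^sub>m A) = c * g A"
    and polar: "\<And>k l t. k < m \<Longrightarrow> l < m \<Longrightarrow> t \<in> {1, -1, \<i>, -\<i>} \<Longrightarrow> g (polar_mat m k l t) = 0"
    and A: "A \<in> carrier_mat m m"
  shows "g A = 0"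
proof -
  have elem: "g (elem_mat m k l) = 0" if "k < m" "l < m" for k l
    unfolding elem_mat_polarization using that by (simp add: add smult polar)
  define mask where "mask S = mat m m (\<lambda>(i,j). if (i,j) \<in> S then A $$ (i,j) else 0)" for S
  have mask_carrier: "mask S \<in> carrier_mat m m" for S
    by (simp add: mask_def)
  have "g (mask S) = 0" if "finite S" "S \<subseteq> {..<m} \<times> {..<m}" for S
    using that
  proof (induction S rule: finite_subset_induct)
    case empty
    have "mask {} = 0 \<cdot>\<^sub>m mask {}"
      by (rule eq_matI) (auto simp: mask_def)
    then show ?case
      by (metis mask_carrier smult mult_zero_left)
  next
    case (insert x S)
    obtain k l where x: "x = (k,l)"
      by (cases x)
    have "mask (insert x S) = mask S + A $$ (k,l) \<cdot>\<^sub>m elem_mat m k l"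
      using insert.hyps(3) x by (intro eq_matI) (auto simp: mask_def elem_mat_def)
    then show ?case
      using insert x elem add smult mask_carrier by (auto simp: elem_mat_def)
  qed
  moreover have "mask ({..<m} \<times> {..<m}) = A"
    using A by (intro eq_matI) (auto simp: mask_def)
  ultimately show ?thesis
    by (metis finite_SigmaI finite_lessThan order_refl)
qed

lemma lin_map_carrier: "lin_map m n \<psi> \<Longrightarrow> \<psi> A \<in> carrier_mat n n"
  by (cases "A \<in> carrier_mat m m") (auto simp: lin_map_def)

lemma lin_map_add: "lin_map m n \<psi> \<Longrightarrow> A \<in> carrier_mat m m \<Longrightarrow> B \<in> carrier_mat m m \<Longrightarrow>
    \<psi> (A + B) = \<psi> A + \<psi> B"
  by (simp add: lin_map_def)

lemma lin_map_smult: "lin_map m n \<psi> \<Longrightarrow> A \<in> carrier_mat m m \<Longrightarrow> \<psi> (c \<cdot>\<^sub>m A) = c \<cdot>\<^sub>m \<psi> A"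
  by (simp add: lin_map_def)

lemma lin_map_outside: "lin_map m n \<psi> \<Longrightarrow> A \<notin> carrier_mat m m \<Longrightarrow> \<psi> A = 0\<^sub>m n n"
  by (simp add: lin_map_def)

definition topleft_map :: "nat \<Rightarrow> nat \<Rightarrow> (complex mat \<Rightarrow> complex mat) \<Rightarrow> complex mat \<Rightarrow> complex mat" where
  "topleft_map m r \<psi> A = (if A \<in> carrier_mat m m then topleft r (\<psi> A) else 0\<^sub>m r r)"

lemma lin_map_topleft_map:
  assumes "lin_map m n \<psi>" and "r \<le> n"
  shows "lin_map m r (topleft_map m r \<psi>)"
  using assms lin_map_carrier[OF assms(1)]
  by (auto simp: lin_map_def topleft_map_def topleft_add[where n=n] topleft_smult[where n=n])

lemma topleft_map_HP:
  assumes "\<psi> \<in> HP m n" and "r \<le> n"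
  shows "topleft_map m r \<psi> \<in> HP m r"
proof -
  have L: "lin_map m n \<psi>" and "\<forall>A\<in>carrier_mat m m. \<psi> (cadj A) = cadj (\<psi> A)"
    using assms(1) by (auto simp: HP_def)
  moreover have "cadj A \<in> carrier_mat m m" if "A \<in> carrier_mat m m" for A
    using that by (simp add: cadj_def)
  ultimately show ?thesis
    using lin_map_topleft_map[OF L assms(2)] lin_map_carrier[OF L] assms(2)
    by (auto simp: HP_def topleft_map_def topleft_cadj[where n=n])
qed

lemma topleft_map_P1:
  assumes "\<psi> \<in> P1 m n" and "r \<le> n"
  shows "topleft_map m r \<psi> \<in> P1 m r"
  using assms lin_map_topleft_map[OF _ assms(2)]
  by (auto simp: P1_def topleft_map_def psd_topleft psd_carrier)

lemma topleft_map_map_comb: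
  assumes "lin_map m n \<phi>" and "lin_map m n \<psi>" and "r \<le> n"
  shows "topleft_map m r (map_comb a \<phi> b \<psi>) = map_comb a (topleft_map m r \<phi>) b (topleft_map m r \<psi>)"
  using assms lin_map_carrier[OF assms(1)] lin_map_carrier[OF assms(2)]
  by (auto simp: topleft_map_def map_comb_def topleft_add[where n=n] topleft_smult[where n=n])

lemma lin_map_corner_comp:
  assumes "lin_map m r \<chi>"
  shows "lin_map m n (corner r n \<circ> \<chi>)"
  using assms lin_map_carrier[OF assms]
  by (auto simp: lin_map_def corner_add corner_smult)

lemma corner_comp_P1:
  assumes "\<chi> \<in> P1 m r" and "r \<le> n"
  shows "corner r n \<circ> \<chi> \<in> P1 m n"
  using assms lin_map_corner_comp by (auto simp: P1_def psd_corner)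

lemma topleft_map_corner_comp:
  assumes "lin_map m r \<chi>" and "r \<le> n"
  shows "topleft_map m r (corner r n \<circ> \<chi>) = \<chi>"
  using assms lin_map_carrier[OF assms(1)]
  by (auto simp: topleft_map_def topleft_corner lin_map_outside)

lemma corner_comp_scale:
  assumes "lin_map m r \<chi>"
  shows "corner r n \<circ> (\<lambda>A. c \<cdot>\<^sub>m \<chi> A) = (\<lambda>A. c \<cdot>\<^sub>m (corner r n \<circ> \<chi>) A)"
  using lin_map_carrier[OF assms] by (auto simp: corner_smult)

lemma corner_comp_nonzero:
  assumes L: "lin_map m r \<chi>" and "r \<le> n" and "\<chi> \<noteq> (\<lambda>A. 0\<^sub>m r r)"
  shows "corner r n \<circ> \<chi> \<noteq> (\<lambda>A. 0\<^sub>m n n)"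
proof
  assume "corner r n \<circ> \<chi> = (\<lambda>A. 0\<^sub>m n n)"
  then have "\<chi> = topleft_map m r (\<lambda>A. 0\<^sub>m n n)"
    using topleft_map_corner_comp[OF L \<open>r \<le> n\<close>] by simp
  also have "\<dots> = (\<lambda>A. 0\<^sub>m r r)"
    using \<open>r \<le> n\<close> by (auto simp: topleft_map_def)
  finally show False
    using \<open>\<chi> \<noteq> (\<lambda>A. 0\<^sub>m r r)\<close> by contradiction
qed

lemma real_lin_functional_add:
  "real_lin_functional m n f \<Longrightarrow> real_lin_functional m n g \<Longrightarrow>
    real_lin_functional m n (\<lambda>\<psi>. f \<psi> + g \<psi>)"
  by (simp add: real_lin_functional_def algebra_simps)

lemma real_lin_functional_topleft_map:
  assumes f: "real_lin_functional m r f" and "r \<le> n"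
  shows "real_lin_functional m n (\<lambda>\<psi>. f (topleft_map m r \<psi>))"
  unfolding real_lin_functional_def
proof (intro ballI allI)
  fix \<phi> \<psi> a b
  assume "\<phi> \<in> HP m n" "\<psi> \<in> HP m n"
  then show "f (topleft_map m r (map_comb a \<phi> b \<psi>)) = a * f (topleft_map m r \<phi>) + b * f (topleft_map m r \<psi>)"
    using f topleft_map_HP[OF _ \<open>r \<le> n\<close>] topleft_map_map_comb[OF _ _ \<open>r \<le> n\<close>]
    by (simp add: real_lin_functional_def HP_def)
qed

definition lower_weight :: "nat \<Rightarrow> nat \<Rightarrow> nat \<Rightarrow> (complex mat \<Rightarrow> complex mat) \<Rightarrow> real" where
  "lower_weight m r n \<psi> =
     (\<Sum>k<m. \<Sum>l<m. \<Sum>t\<in>{1, -1, \<i>, -\<i>}. \<Sum>i\<in>{r..<n}. Re (\<psi> (polar_mat m k l t) $$ (i,i)))"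

lemma real_lin_functional_lower_weight: "real_lin_functional m n (lower_weight m r n)"
  unfolding real_lin_functional_def
proof (intro ballI allI)
  fix \<phi> \<psi> a b
  assume "\<phi> \<in> HP m n" "\<psi> \<in> HP m n"
  then have car: "\<phi> A \<in> carrier_mat n n" "\<psi> A \<in> carrier_mat n n" for A
    by (auto simp: HP_def lin_map_carrier)
  have "Re (map_comb a \<phi> b \<psi> A $$ (i,i)) = a * Re (\<phi> A $$ (i,i)) + b * Re (\<psi> A $$ (i,i))"
    if "i \<in> {r..<n}" for A i
    using that carrier_matD[OF car(1)] carrier_matD[OF car(2)] by (simp add: map_comb_def)
  then show "lower_weight m r n (map_comb a \<phi> b \<psi>) = a * lower_weight m r n \<phi> + b * lower_weight m r n \<psi>"
    unfolding lower_weight_def by (simp add: sum.distrib sum_distrib_left)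
qed

lemma P1_diag_polar_mat:
  assumes "\<psi> \<in> P1 m n" and "i < n"
  shows "\<psi> (polar_mat m k l t) $$ (i,i) \<in> \<real>" and "0 \<le> Re (\<psi> (polar_mat m k l t) $$ (i,i))"
proof -
  have "psd n (\<psi> (polar_mat m k l t))"
    using assms(1) psd_polar_mat by (simp add: P1_def)
  then show "\<psi> (polar_mat m k l t) $$ (i,i) \<in> \<real>" and "0 \<le> Re (\<psi> (polar_mat m k l t) $$ (i,i))"
    using psd_diag \<open>i < n\<close> by blast+
qed

lemma lower_weight_nonneg: "\<psi> \<in> P1 m n \<Longrightarrow> 0 \<le> lower_weight m r n \<psi>"
  unfolding lower_weight_def by (intro sum_nonneg) (simp add: P1_diag_polar_mat)

lemma lower_weight_corner_comp: "lower_weight m r n (corner r n \<circ> \<chi>) = 0"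
  by (simp add: lower_weight_def)

lemma P1_lower_weight_eq_0_diag:
  assumes \<psi>: "\<psi> \<in> P1 m n" and "lower_weight m r n \<psi> = 0"
    and "k < m" "l < m" "t \<in> {1, -1, \<i>, -\<i>}" "r \<le> i" "i < n"
  shows "\<psi> (polar_mat m k l t) $$ (i,i) = 0"
proof -
  let ?d = "\<lambda>k l t i. Re (\<psi> (polar_mat m k l t) $$ (i,i))"
  have d: "0 \<le> ?d k l t i" if "i \<in> {r..<n}" for k l t i
    using P1_diag_polar_mat(2)[OF \<psi>] that by simp
  have "?d k l t i \<le> (\<Sum>i\<in>{r..<n}. ?d k l t i)"
    by (rule member_le_sum) (use assms d in auto)
  also have "\<dots> \<le> (\<Sum>t\<in>{1, -1, \<i>, -\<i>}. \<Sum>i\<in>{r..<n}. ?d k l t i)"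
    by (rule member_le_sum) (use assms d in \<open>auto intro!: sum_nonneg\<close>)
  also have "\<dots> \<le> (\<Sum>l<m. \<Sum>t\<in>{1, -1, \<i>, -\<i>}. \<Sum>i\<in>{r..<n}. ?d k l t i)"
    by (rule member_le_sum) (use assms d in \<open>auto intro!: sum_nonneg\<close>)
  also have "\<dots> \<le> lower_weight m r n \<psi>"
    unfolding lower_weight_def by (rule member_le_sum) (use assms d in \<open>auto intro!: sum_nonneg\<close>)
  finally have "Re (\<psi> (polar_mat m k l t) $$ (i,i)) = 0"
    using d[of i k l t] assms(2,6,7) by simp
  then show ?thesis
    using P1_diag_polar_mat(1)[OF \<psi> \<open>i < n\<close>] by (metis complex_is_Real_iff complex_eq_iff zero_complex.sel)
qed

lemma P1_lower_weight_eq_0_imp_corner: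
  assumes \<psi>: "\<psi> \<in> P1 m n" and w: "lower_weight m r n \<psi> = 0" and "r \<le> n"
  shows "\<psi> = corner r n \<circ> topleft_map m r \<psi>"
proof
  fix A
  have L: "lin_map m n \<psi>"
    using \<psi> by (simp add: P1_def)
  have off_block: "\<psi> A $$ (i,j) = 0"
    if A: "A \<in> carrier_mat m m" and ij: "i < n" "j < n" "\<not> (i < r \<and> j < r)" for A i j
  proof (rule mat_functional_eq_0_if_zero_on_polar_mats[where g = "\<lambda>B. \<psi> B $$ (i,j)", OF _ _ _ A])
    fix B C :: "complex mat"
    assume "B \<in> carrier_mat m m" "C \<in> carrier_mat m m"
    then show "\<psi> (B + C) $$ (i,j) = \<psi> B $$ (i,j) + \<psi> C $$ (i,j)"
      using lin_map_add[OF L] lin_map_carrier[OF L] ij by (metis carrier_matD index_add_mat(1))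
  next
    fix B :: "complex mat" and c :: complex
    assume "B \<in> carrier_mat m m"
    then show "\<psi> (c \<cdot>\<^sub>m B) $$ (i,j) = c * \<psi> B $$ (i,j)"
      using lin_map_smult[OF L] lin_map_carrier[OF L] ij by (metis carrier_matD index_smult_mat(1))
  next
    fix k l t
    assume klt: "k < m" "l < m" "t \<in> {1, -1, \<i>, -\<i>}"
    let ?Q = "\<psi> (polar_mat m k l t)"
    have Q: "psd n ?Q"
      using \<psi> psd_polar_mat by (simp add: P1_def)
    show "?Q $$ (i,j) = 0"
    proof (cases "r \<le> i")
      case True
      then show ?thesis
        using psd_zero_diag_imp_zero_entry[OF Q ij(1,2)] P1_lower_weight_eq_0_diag[OF \<psi> w klt] ij by simp
    next
      case False
      then have "?Q $$ (j,i) = 0"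
        using psd_zero_diag_imp_zero_entry[OF Q ij(2,1)] P1_lower_weight_eq_0_diag[OF \<psi> w klt] ij by simp
      then show ?thesis
        using psd_conj_entry[OF Q ij(2,1)] by simp
    qed
  qed
  show "\<psi> A = (corner r n \<circ> topleft_map m r \<psi>) A"
  proof (cases "A \<in> carrier_mat m m")
    case True
    then show ?thesis
      using lin_map_carrier[OF L] off_block \<open>r \<le> n\<close> by (intro eq_matI) (auto simp: topleft_map_def)
  next
    case False
    then show ?thesis
      using lin_map_outside[OF L] by (simp add: topleft_map_def)
  qed
qed

lemma zero_set_topleft_map_lower_weight:
  assumes "r \<le> n" and f_nonneg: "\<forall>\<chi>\<in>P1 m r. 0 \<le> f \<chi>"
  shows "{\<psi> \<in> P1 m n. f (topleft_map m r \<psi>) + lower_weight m r n \<psi> = 0} =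
    (\<lambda>\<chi>. corner r n \<circ> \<chi>) ` {\<chi> \<in> P1 m r. f \<chi> = 0}"
proof (intro equalityI subsetI)
  fix \<psi>
  assume "\<psi> \<in> {\<psi> \<in> P1 m n. f (topleft_map m r \<psi>) + lower_weight m r n \<psi> = 0}"
  then have \<psi>: "\<psi> \<in> P1 m n" and sum_0: "f (topleft_map m r \<psi>) + lower_weight m r n \<psi> = 0"
    by auto
  have "topleft_map m r \<psi> \<in> P1 m r"
    using \<psi> \<open>r \<le> n\<close> by (rule topleft_map_P1)
  moreover from this have "f (topleft_map m r \<psi>) = 0" and "lower_weight m r n \<psi> = 0"
    using sum_0 f_nonneg lower_weight_nonneg[OF \<psi>] by (auto simp: add_nonneg_eq_0_iff)
  moreover from this have "\<psi> = corner r n \<circ> topleft_map m r \<psi>"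
    using P1_lower_weight_eq_0_imp_corner[OF \<psi> _ \<open>r \<le> n\<close>] by simp
  ultimately show "\<psi> \<in> (\<lambda>\<chi>. corner r n \<circ> \<chi>) ` {\<chi> \<in> P1 m r. f \<chi> = 0}"
    by blast
next
  fix \<psi>
  assume "\<psi> \<in> (\<lambda>\<chi>. corner r n \<circ> \<chi>) ` {\<chi> \<in> P1 m r. f \<chi> = 0}"
  then obtain \<chi> where \<chi>: "\<chi> \<in> P1 m r" "f \<chi> = 0" and \<psi>: "\<psi> = corner r n \<circ> \<chi>"
    by blast
  then show "\<psi> \<in> {\<psi> \<in> P1 m n. f (topleft_map m r \<psi>) + lower_weight m r n \<psi> = 0}"
    using corner_comp_P1 topleft_map_corner_comp lower_weight_corner_comp \<open>r \<le> n\<close>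
    by (simp add: P1_def)
qed

theorem proposition2p1:
  fixes m n r :: nat and \<phi> :: "complex mat \<Rightarrow> complex mat"
  assumes "0 < m" and "0 < n" and "0 < r" and "r \<le> n"
    and "exposed_ray m r \<phi>"
  shows "exposed_ray m n (corner r n \<circ> \<phi>)"
proof -
  obtain f where \<phi>: "\<phi> \<in> P1 m r" and nonzero: "\<phi> \<noteq> (\<lambda>A. 0\<^sub>m r r)"
    and f_lin: "real_lin_functional m r f" and f_nonneg: "\<forall>\<chi>\<in>P1 m r. 0 \<le> f \<chi>"
    and f_zero: "{\<chi> \<in> P1 m r. f \<chi> = 0} = {(\<lambda>A. complex_of_real c \<cdot>\<^sub>m \<phi> A) | c. c \<ge> 0}"
    using \<open>exposed_ray m r \<phi>\<close> unfolding exposed_ray_def by blast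
  have L: "lin_map m r \<phi>"
    using \<phi> by (simp add: P1_def)
  let ?F = "\<lambda>\<psi>. f (topleft_map m r \<psi>) + lower_weight m r n \<psi>"
  have "real_lin_functional m n ?F"
    using real_lin_functional_add real_lin_functional_topleft_map[OF f_lin \<open>r \<le> n\<close>]
      real_lin_functional_lower_weight by blast
  moreover have "\<forall>\<psi>\<in>P1 m n. 0 \<le> ?F \<psi>"
    using f_nonneg topleft_map_P1 lower_weight_nonneg \<open>r \<le> n\<close> by (simp add: add_nonneg_nonneg)
  moreover have "{\<psi> \<in> P1 m n. ?F \<psi> = 0} = {(\<lambda>A. complex_of_real c \<cdot>\<^sub>m (corner r n \<circ> \<phi>) A) | c. c \<ge> 0}"
    unfolding zero_set_topleft_map_lower_weight[OF \<open>r \<le> n\<close> f_nonneg] f_zero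
    by (simp add: setcompr_eq_image image_image corner_comp_scale[OF L])
  ultimately show ?thesis
    unfolding exposed_ray_def
    using corner_comp_P1[OF \<phi> \<open>r \<le> n\<close>] corner_comp_nonzero[OF L \<open>r \<le> n\<close> nonzero] by blast
qed

end
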